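(* Let $G_1$ ($n\times k$) and $G_0$ ($n\times l$) be fixed binary matrices with $\widetilde G=[G_1\ G_0]$ of full column rank, let $\mathbf m\in\{0,1\}^k$ be fixed, and let $t_1=\lfloor (d_1-1)/2\rfloor$. On the binary defect and symmetric channel with two-step encoding and any decoder satisfying the bounded-distance property described in the context, $$P(\widehat{\mathbf m}\neq\mathbf m)\le\sum_{u=d_0}^{n}\left\{\binom nu\beta^u(1-\beta)^{n-u}\min\left\{\frac{\sum_{w=d_0}^{u}B_{0,w}\binom{n-w}{u-w}}{\binom nu},1\right\}\sum_{t=\max(0,\,t_1+d_0-u)}^{n}\binom nt p^t(1-p)^{n-t}\right\}+\sum_{t=t_1+1}^{n}\binom nt p^t(1-p)^{n-t}.$$
   Context: All arithmetic is over $\mathrm{GF}(2)$. $\mathcal C_0^{\perp}=\{\mathbf x\in\{0,1\}^n: G_0^T\mathbf x=\mathbf 0\}$; $B_{0,w}$ is its number of vectors of Hamming weight $w$ and $d_0$ its minimum nonzero weight. $d_1$ is the minimum Hamming weight of $G_1\mathbf m'+G_0\mathbf d'$ over all $\mathbf m'\neq\mathbf 0$, $\mathbf d'\in\{0,1\}^l$. Binary defect and symmetric channel (BDSC) with parameters $(\beta,p)$: each of the $n$ cells is independently defective with probability $\beta$; a defective cell is stuck at $0$ or $1$, each with probability $1/2$, independently; $\mathcal U$ is the set of defects, $U=|\mathcal U|$, $\mathbf s$ the stuck-at values. Writing codeword $\mathbf c$ stores $\mathbf c\circ\mathbf s$, where $(\mathbf c\circ\mathbf s)_i=s_i$ for $i\in\mathcal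 U$ and $c_i$ otherwise; the read vector is $\mathbf y=\mathbf c\circ\mathbf s+\mathbf z$, with $\mathbf z$ having i.i.d. $\mathrm{Bernoulli}(p)$ entries independent of the defects. For a matrix/vector, superscript $\mathcal A$ denotes the rows indexed by $\mathcal A$. Two-step encoding: let $\mathbf b^{\mathcal U}=(G_1\mathbf m)^{\mathcal U}+\mathbf s^{\mathcal U}$. Step 1: if $G_0^{\mathcal U}\mathbf d=\mathbf b^{\mathcal U}$ has a solution $\mathbf d$, use it ($E=1$). Otherwise ($E=0$; this requires $U\ge d_0$), Step 2: choose any $\mathcal U'\subseteq\mathcal U$ with $|\mathcal U'|=d_0-1$ and take $\mathbf d$ solving $G_0^{\mathcal U'}\mathbf d=\mathbf b^{\mathcal U'}$ (such a solution always exists since any $d_0-1$ rows of $G_0$ are linearly independent). The stored codeword is $\mathbf c=G_1\mathbf m+G_0\mathbf d$. Decoder: any map $\mathbf y\mapsto\widehat{\mathbf m}$ such that $\widehat{\mathbf m}=\mathbf m$ whenever $\mathbf y$ and $\mathbf c$ differ in at most $t_1$ positions (e.g. bounded-distance decoding of the code generated by $\widetilde G$). *)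

theory Defs
  imports Complex_Main "HOL-Library.Z2"
begin

text \<open>Binary n x k matrices: functions nat => nat => bit (only entries i<n, j<k are used).\<close>

definition vecs :: "nat \<Rightarrow> (nat \<Rightarrow> bit) set" where
  "vecs n = {x. \<forall>i\<ge>n. x i = 0}"

definition mv :: "(nat \<Rightarrow> nat \<Rightarrow> bit) \<Rightarrow> nat \<Rightarrow> (nat \<Rightarrow> bit) \<Rightarrow> (nat \<Rightarrow> bit)" where
  "mv G k x = (\<lambda>i. \<Sum>j<k. G i j * x j)"

definition hw :: "nat \<Rightarrow> (nat \<Rightarrow> bit) \<Rightarrow> nat" where
  "hw n x = card {i. i < n \<and> x i \<noteq> 0}"

definition hdist :: "nat \<Rightarrow> (nat \<Rightarrow> bit) \<Rightarrow> (nat \<Rightarrow> bit) \<Rightarrow> nat" where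
  "hdist n x y = card {i. i < n \<and> x i \<noteq> y i}"

definition full_col_rank :: "nat \<Rightarrow> nat \<Rightarrow> nat \<Rightarrow> (nat \<Rightarrow> nat \<Rightarrow> bit) \<Rightarrow> (nat \<Rightarrow> nat \<Rightarrow> bit) \<Rightarrow> bool" where
  "full_col_rank n k l G1 G0 \<longleftrightarrow>
     (\<forall>m'\<in>vecs k. \<forall>d'\<in>vecs l.
        (\<forall>i<n. mv G1 k m' i + mv G0 l d' i = 0) \<longrightarrow> m' = (\<lambda>_. 0) \<and> d' = (\<lambda>_. 0))"

definition C0perp :: "nat \<Rightarrow> nat \<Rightarrow> (nat \<Rightarrow> nat \<Rightarrow> bit) \<Rightarrow> (nat \<Rightarrow> bit) set" where
  "C0perp n l G0 = {x \<in> vecs n. \<forall>j<l. (\<Sum>i<n. G0 i j * x i) = 0}"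

definition B0 :: "nat \<Rightarrow> nat \<Rightarrow> (nat \<Rightarrow> nat \<Rightarrow> bit) \<Rightarrow> nat \<Rightarrow> nat" where
  "B0 n l G0 w = card {x \<in> C0perp n l G0. hw n x = w}"

text \<open>Minimum nonzero weight of C0^perp (convention: n+1, i.e. "infinity", if C0^perp = {0}).\<close>
definition dmin0 :: "nat \<Rightarrow> nat \<Rightarrow> (nat \<Rightarrow> nat \<Rightarrow> bit) \<Rightarrow> nat" where
  "dmin0 n l G0 = (let S = {hw n x | x. x \<in> C0perp n l G0 \<and> x \<noteq> (\<lambda>_. 0)}
                   in if S = {} then n + 1 else Min S)"

text \<open>d1 = min weight of G1 m' + G0 d' over m' \<noteq> 0 (convention: 2n+1 if k = 0).\<close>
definition dmin1 :: "nat \<Rightarrow> nat \<Rightarrow> nat \<Rightarrow> (nat \<Rightarrow> nat \<Rightarrow> bit) \<Rightarrow> (nat \<Rightarrow> nat \<Rightarrow> bit) \<Rightarrow> nat" where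
  "dmin1 n k l G1 G0 = (let S = {hw n (\<lambda>i. mv G1 k m' i + mv G0 l d' i) | m' d'.
                                   m' \<in> vecs k \<and> m' \<noteq> (\<lambda>_. 0) \<and> d' \<in> vecs l}
                        in if S = {} then 2 * n + 1 else Min S)"

text \<open>Stuck-at value vectors for defect set U (values outside U are irrelevant, fixed to 0).\<close>
definition stucks :: "nat \<Rightarrow> nat set \<Rightarrow> (nat \<Rightarrow> bit) set" where
  "stucks n U = {s \<in> vecs n. \<forall>i. i \<notin> U \<longrightarrow> s i = 0}"

definition two_step_encoder ::
  "nat \<Rightarrow> nat \<Rightarrow> nat \<Rightarrow> (nat \<Rightarrow> nat \<Rightarrow> bit) \<Rightarrow> (nat \<Rightarrow> nat \<Rightarrow> bit) \<Rightarrow> (nat \<Rightarrow> bit)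
     \<Rightarrow> (nat set \<Rightarrow> (nat \<Rightarrow> bit) \<Rightarrow> (nat \<Rightarrow> bit)) \<Rightarrow> bool" where
  "two_step_encoder n k l G1 G0 m enc \<longleftrightarrow>
     (\<forall>U s. U \<subseteq> {..<n} \<longrightarrow> s \<in> stucks n U \<longrightarrow>
        (let b = (\<lambda>i. mv G1 k m i + s i); d = enc U s in
          d \<in> vecs l \<and>
          (if (\<exists>d'\<in>vecs l. \<forall>i\<in>U. mv G0 l d' i = b i)
           then (\<forall>i\<in>U. mv G0 l d i = b i)
           else (\<exists>U'\<subseteq>U. card U' = dmin0 n l G0 - 1 \<and> (\<forall>i\<in>U'. mv G0 l d i = b i)))))"

definition codeword :: "nat \<Rightarrow> nat \<Rightarrow> (nat \<Rightarrow> nat \<Rightarrow> bit) \<Rightarrow> (nat \<Rightarrow> nat \<Rightarrow> bit) \<Rightarrow> (nat \<Rightarrow> bit) \<Rightarrow> (nat \<Rightarrow> bit) \<Rightarrow> (nat \<Rightarrow> bit)" where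
  "codeword k l G1 G0 m d = (\<lambda>i. mv G1 k m i + mv G0 l d i)"

definition read_vec :: "nat \<Rightarrow> (nat \<Rightarrow> bit) \<Rightarrow> nat set \<Rightarrow> (nat \<Rightarrow> bit) \<Rightarrow> (nat \<Rightarrow> bit) \<Rightarrow> (nat \<Rightarrow> bit)" where
  "read_vec n c U s z = (\<lambda>i. if i < n then (if i \<in> U then s i else c i) + z i else 0)"

definition bd_decoder ::
  "nat \<Rightarrow> nat \<Rightarrow> nat \<Rightarrow> (nat \<Rightarrow> nat \<Rightarrow> bit) \<Rightarrow> (nat \<Rightarrow> nat \<Rightarrow> bit) \<Rightarrow> nat \<Rightarrow> (nat \<Rightarrow> bit)
     \<Rightarrow> ((nat \<Rightarrow> bit) \<Rightarrow> (nat \<Rightarrow> bit)) \<Rightarrow> bool" where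
  "bd_decoder n k l G1 G0 t1 m dec \<longleftrightarrow>
     (\<forall>d\<in>vecs l. \<forall>y\<in>vecs n. hdist n y (codeword k l G1 G0 m d) \<le> t1 \<longrightarrow> dec y = m)"

text \<open>Probability of decoding error on the BDSC(beta,p), as the exact finite sum over
  defect sets U, stuck values s (uniform on U) and noise vectors z (i.i.d. Bernoulli(p)).\<close>
definition error_prob ::
  "nat \<Rightarrow> nat \<Rightarrow> nat \<Rightarrow> (nat \<Rightarrow> nat \<Rightarrow> bit) \<Rightarrow> (nat \<Rightarrow> nat \<Rightarrow> bit) \<Rightarrow> (nat \<Rightarrow> bit)
     \<Rightarrow> (nat set \<Rightarrow> (nat \<Rightarrow> bit) \<Rightarrow> (nat \<Rightarrow> bit)) \<Rightarrow> ((nat \<Rightarrow> bit) \<Rightarrow> (nat \<Rightarrow> bit))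
     \<Rightarrow> real \<Rightarrow> real \<Rightarrow> real" where
  "error_prob n k l G1 G0 m enc dec \<beta> p =
     (\<Sum>U\<in>Pow {..<n}. \<Sum>s\<in>stucks n U. \<Sum>z\<in>vecs n.
        \<beta> ^ card U * (1 - \<beta>) ^ (n - card U) * (1/2) ^ card U
        * p ^ hw n z * (1 - p) ^ (n - hw n z)
        * (if dec (read_vec n (codeword k l G1 G0 m (enc U s)) U s z) \<noteq> m then 1 else 0))"

end

theory Submission
  imports Defs "HOL-Library.Indicator_Function"
begin

text \<open>If Step 1 of the encoder succeeds, the stored word agrees with the intended codeword on the
  defects, so the read word lies within distance wt(z) of a codeword and an error forces
  wt(z) > t1. If Step 1 fails, the Fredholm alternative over GF(2) yields a nonzero word of
  C0^perp supported inside the defect set U, and Step 2 leaves at most |U| - d0 + 1 defects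
  mismatched, so an error forces wt(z) \<ge> t1 + d0 - |U|. A union bound over the nonzero dual
  words of weight w \<le> u shows that at most the sum of B0(w) C(n - w, u - w) defect sets of size u
  contain such a support (and trivially at most C(n, u) do); averaging over defect sets, stuck-at
  values and noise gives the bound.\<close>

text \<open>Keep GF(2) arithmetic in ring form instead of letting the simplifier turn it into XOR/AND.\<close>

declare add_bit_eq_xor [simp del] mult_bit_eq_and [simp del]

lemma bit_add_eq_iff: "(x::bit) + a = c \<longleftrightarrow> x = c + a"
  by (cases a; cases c; cases x) auto

subsection \<open>Binary vectors as indicator functions\<close>

lemma indicator_support_bit: "indicator {i. x i \<noteq> 0} = (x :: nat \<Rightarrow> bit)"
  by (rule ext) (simp add: indicator_def)

lemma inj_indicator_bit: "inj (\<lambda>S. indicator S :: nat \<Rightarrow> bit)"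
proof (rule injI)
  fix S T :: "nat set"
  assume "(indicator S :: nat \<Rightarrow> bit) = indicator T"
  then have "{i. (indicator S i :: bit) \<noteq> 0} = {i. (indicator T i :: bit) \<noteq> 0}"
    by simp
  then show "S = T"
    by (simp add: indicator_def)
qed

lemma supported_eq_indicator_image:
  "{x :: nat \<Rightarrow> bit. \<forall>i. i \<notin> A \<longrightarrow> x i = 0} = (\<lambda>S. indicator S) ` Pow A"
proof
  show "{x :: nat \<Rightarrow> bit. \<forall>i. i \<notin> A \<longrightarrow> x i = 0} \<subseteq> (\<lambda>S. indicator S) ` Pow A"
  proof
    fix x :: "nat \<Rightarrow> bit"
    assume "x \<in> {x. \<forall>i. i \<notin> A \<longrightarrow> x i = 0}"
    then have "{i. x i \<noteq> 0} \<in> Pow A"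
      by auto
    then show "x \<in> (\<lambda>S. indicator S) ` Pow A"
      by (rule image_eqI[rotated]) (rule indicator_support_bit[symmetric])
  qed
qed (auto simp: indicator_def)

lemma vecs_eq_indicator_image: "vecs n = (\<lambda>S. indicator S) ` Pow {..<n}"
  by (subst supported_eq_indicator_image[symmetric]) (auto simp: vecs_def)

lemma stucks_eq_indicator_image:
  "U \<subseteq> {..<n} \<Longrightarrow> stucks n U = (\<lambda>S. indicator S) ` Pow U"
  by (subst supported_eq_indicator_image[symmetric]) (auto simp: stucks_def vecs_def)

lemma finite_vecs [simp]: "finite (vecs n)"
  by (simp add: vecs_eq_indicator_image)

lemma card_stucks: "U \<subseteq> {..<n} \<Longrightarrow> card (stucks n U) = 2 ^ card U"
  by (simp add: stucks_eq_indicator_image card_image inj_on_subset[OF inj_indicator_bit]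
      card_Pow finite_subset)

lemma hw_indicator: "S \<subseteq> {..<n} \<Longrightarrow> hw n (indicator S) = card S"
  unfolding hw_def indicator_def by (rule arg_cong[where f = card]) auto

lemma hw_le: "hw n x \<le> n"
  using card_mono[of "{..<n}" "{i. i < n \<and> x i \<noteq> 0}"] by (auto simp: hw_def)

lemma hw_eq_card_support:
  assumes "x \<in> vecs n"
  shows "hw n x = card {i. x i \<noteq> 0}"
proof -
  have "{i. i < n \<and> x i \<noteq> 0} = {i. x i \<noteq> 0}"
    using assms by (auto simp: vecs_def not_less[symmetric])
  then show ?thesis
    by (simp add: hw_def)
qed

lemma sum_Pow_by_card:
  fixes f :: "nat \<Rightarrow> 'a::comm_semiring_1"
  assumes "finite A"
  shows "(\<Sum>U\<in>Pow A. f (card U) * of_bool (P U))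
       = (\<Sum>u\<le>card A. f u * of_nat (card {U. U \<subseteq> A \<and> card U = u \<and> P U}))"
proof -
  have "(\<Sum>U\<in>Pow A. f (card U) * of_bool (P U))
      = (\<Sum>u\<le>card A. \<Sum>U\<in>{U\<in>Pow A. card U = u}. f (card U) * of_bool (P U))"
    by (rule sum.group[symmetric]) (use assms in \<open>auto intro: card_mono\<close>)
  also have "\<dots> = (\<Sum>u\<le>card A. f u * of_nat (card {U. U \<subseteq> A \<and> card U = u \<and> P U}))"
  proof (rule sum.cong[OF refl])
    fix u
    have "(\<Sum>U\<in>{U\<in>Pow A. card U = u}. f (card U) * of_bool (P U))
        = f u * (\<Sum>U\<in>{U\<in>Pow A. card U = u}. of_bool (P U))"
      by (simp add: sum_distrib_left)
    also have "(\<Sum>U\<in>{U\<in>Pow A. card U = u}. of_bool (P U))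
        = (of_nat (card ({U\<in>Pow A. card U = u} \<inter> {U. P U})) :: 'a)"
      using assms by (intro sum_of_bool_eq) auto
    also have "{U\<in>Pow A. card U = u} \<inter> {U. P U} = {U. U \<subseteq> A \<and> card U = u \<and> P U}"
      by auto
    finally show "(\<Sum>U\<in>{U\<in>Pow A. card U = u}. f (card U) * of_bool (P U))
        = f u * of_nat (card {U. U \<subseteq> A \<and> card U = u \<and> P U})" .
  qed
  finally show ?thesis .
qed

lemma sum_Pow_card:
  fixes f :: "nat \<Rightarrow> 'a::comm_semiring_1"
  assumes "finite A"
  shows "(\<Sum>U\<in>Pow A. f (card U)) = (\<Sum>u\<le>card A. of_nat (card A choose u) * f u)"
  using sum_Pow_by_card[OF assms, of f "\<lambda>_. True"] assms by (simp add: n_subsets mult.commute)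

lemma sum_vecs_by_weight:
  fixes f :: "nat \<Rightarrow> 'a::comm_semiring_1"
  shows "(\<Sum>z\<in>vecs n. f (hw n z)) = (\<Sum>t\<le>n. of_nat (n choose t) * f t)"
proof -
  have "(\<Sum>z\<in>vecs n. f (hw n z)) = (\<Sum>S\<in>Pow {..<n}. f (hw n (indicator S)))"
    unfolding vecs_eq_indicator_image
    by (simp add: sum.reindex inj_on_subset[OF inj_indicator_bit])
  also have "\<dots> = (\<Sum>S\<in>Pow {..<n}. f (card S))"
    by (rule sum.cong) (auto simp: hw_indicator)
  also have "\<dots> = (\<Sum>t\<le>n. of_nat (n choose t) * f t)"
    by (simp add: sum_Pow_card)
  finally show ?thesis .
qed

definition binomial_tail :: "nat \<Rightarrow> real \<Rightarrow> nat \<Rightarrow> real" where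
  "binomial_tail n p a = (\<Sum>t = a..n. real (n choose t) * p ^ t * (1 - p) ^ (n - t))"

lemma binomial_tail_nonneg: "0 \<le> p \<Longrightarrow> p \<le> 1 \<Longrightarrow> 0 \<le> binomial_tail n p a"
  unfolding binomial_tail_def by (intro sum_nonneg) simp

lemma sum_vecs_weight_ge:
  "(\<Sum>z\<in>vecs n. p ^ hw n z * (1 - p) ^ (n - hw n z) * of_bool (a \<le> hw n z))
   = binomial_tail n p a"
proof -
  have "(\<Sum>z\<in>vecs n. p ^ hw n z * (1 - p) ^ (n - hw n z) * of_bool (a \<le> hw n z))
      = (\<Sum>t\<le>n. real (n choose t) * (p ^ t * (1 - p) ^ (n - t) * of_bool (a \<le> t)))"
    by (rule sum_vecs_by_weight)
  also have "\<dots> = (\<Sum>t\<in>{..n}. if a \<le> t then real (n choose t) * p ^ t * (1 - p) ^ (n - t) else 0)"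
    by (rule sum.cong) auto
  also have "\<dots> = (\<Sum>t\<in>{t\<in>{..n}. a \<le> t}. real (n choose t) * p ^ t * (1 - p) ^ (n - t))"
    by (rule sum.inter_filter[symmetric]) simp
  also have "{t\<in>{..n}. a \<le> t} = {a..n}"
    by auto
  finally show ?thesis
    unfolding binomial_tail_def .
qed

lemma sum_Pow_binomial_weights_split:
  fixes \<beta> c :: real
  shows "(\<Sum>U\<in>Pow {..<n}. \<beta> ^ card U * (1 - \<beta>) ^ (n - card U) * (c + of_bool (P U) * g (card U)))
       = c + (\<Sum>u\<le>n. \<beta> ^ u * (1 - \<beta>) ^ (n - u) * g u
                      * real (card {U. U \<subseteq> {..<n} \<and> card U = u \<and> P U}))"
proof -
  have "(\<Sum>U\<in>Pow {..<n}. \<beta> ^ card U * (1 - \<beta>) ^ (n - card U))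
      = (\<Sum>u\<le>n. real (n choose u) * (\<beta> ^ u * (1 - \<beta>) ^ (n - u)))"
    using sum_Pow_card[of "{..<n}" "\<lambda>u. \<beta> ^ u * (1 - \<beta>) ^ (n - u)"] by simp
  also have "\<dots> = (\<beta> + (1 - \<beta>)) ^ n"
    unfolding binomial_ring by (simp add: mult_ac)
  finally have weights: "(\<Sum>U\<in>Pow {..<n}. \<beta> ^ card U * (1 - \<beta>) ^ (n - card U)) = 1"
    by simp
  have "(\<Sum>U\<in>Pow {..<n}. \<beta> ^ card U * (1 - \<beta>) ^ (n - card U) * g (card U) * of_bool (P U))
      = (\<Sum>u\<le>n. \<beta> ^ u * (1 - \<beta>) ^ (n - u) * g u
                      * real (card {U. U \<subseteq> {..<n} \<and> card U = u \<and> P U}))"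
    using sum_Pow_by_card[of "{..<n}" "\<lambda>u. \<beta> ^ u * (1 - \<beta>) ^ (n - u) * g u" P] by simp
  moreover have "(\<Sum>U\<in>Pow {..<n}. \<beta> ^ card U * (1 - \<beta>) ^ (n - card U) * (c + of_bool (P U) * g (card U)))
      = c * (\<Sum>U\<in>Pow {..<n}. \<beta> ^ card U * (1 - \<beta>) ^ (n - card U))
        + (\<Sum>U\<in>Pow {..<n}. \<beta> ^ card U * (1 - \<beta>) ^ (n - card U) * g (card U) * of_bool (P U))"
    by (simp add: distrib_left sum.distrib sum_distrib_left mult_ac)
  ultimately show ?thesis
    using weights by simp
qed

subsection \<open>The Fredholm alternative over GF(2)\<close>

text \<open>One of y, y' and y + y' is orthogonal to column l.\<close>

lemma dual_certificate_extend:
  fixes G :: "nat \<Rightarrow> nat \<Rightarrow> bit"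
  assumes y: "\<forall>j<l. (\<Sum>i\<in>U. G i j * y i) = 0" "(\<Sum>i\<in>U. b i * y i) = 1"
    and y': "\<forall>j<l. (\<Sum>i\<in>U. G i j * y' i) = 0" "(\<Sum>i\<in>U. (b i + G i l) * y' i) = 1"
  shows "\<exists>y. (\<forall>j<Suc l. (\<Sum>i\<in>U. G i j * y i) = 0) \<and> (\<Sum>i\<in>U. b i * y i) = 1"
proof -
  have sum_add: "(\<Sum>i\<in>U. f i * (y i + y' i)) = (\<Sum>i\<in>U. f i * y i) + (\<Sum>i\<in>U. f i * y' i)"
    for f :: "nat \<Rightarrow> bit"
    by (simp add: distrib_left sum.distrib)
  have "(\<Sum>i\<in>U. b i * y' i) + (\<Sum>i\<in>U. G i l * y' i) = 1"
    using y'(2) by (simp add: distrib_right sum.distrib)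
  then have b_y': "(\<Sum>i\<in>U. b i * y' i) = 1 + (\<Sum>i\<in>U. G i l * y' i)"
    by (rule iffD1[OF bit_add_eq_iff])
  consider "(\<Sum>i\<in>U. G i l * y i) = 0" | "(\<Sum>i\<in>U. G i l * y' i) = 0"
    | "(\<Sum>i\<in>U. G i l * y i) = 1" "(\<Sum>i\<in>U. G i l * y' i) = 1"
    using bit_not_zero_iff by blast
  then show ?thesis
  proof cases
    case 1
    then show ?thesis
      using y by (intro exI[of _ y]) (auto simp: less_Suc_eq)
  next
    case 2
    then show ?thesis
      using y'(1) b_y' by (intro exI[of _ y']) (auto simp: less_Suc_eq)
  next
    case 3
    have "\<forall>j<Suc l. (\<Sum>i\<in>U. G i j * (y i + y' i)) = 0"
      using 3 y(1) y'(1) by (auto simp: sum_add less_Suc_eq)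
    moreover have "(\<Sum>i\<in>U. b i * (y i + y' i)) = 1"
      using 3 y(2) b_y' by (simp add: sum_add)
    ultimately show ?thesis
      by (intro exI[of _ "\<lambda>i. y i + y' i"] conjI)
  qed
qed

lemma gf2_alternative:
  fixes G :: "nat \<Rightarrow> nat \<Rightarrow> bit" and b :: "nat \<Rightarrow> bit"
  assumes "finite U"
  shows "(\<exists>d\<in>vecs l. \<forall>i\<in>U. mv G l d i = b i)
       \<or> (\<exists>y. (\<forall>j<l. (\<Sum>i\<in>U. G i j * y i) = 0) \<and> (\<Sum>i\<in>U. b i * y i) = 1)"
proof (induction l arbitrary: b)
  case 0
  show ?case
  proof (cases "\<forall>i\<in>U. b i = 0")
    case True
    then show ?thesis
      by (intro disjI1 bexI[of _ "\<lambda>_. 0"]) (auto simp: vecs_def mv_def)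
  next
    case False
    then obtain a where a: "a \<in> U" "b a = 1"
      by auto
    have "(\<Sum>i\<in>U. b i * indicator {a} i) = b a"
      using a assms by (simp add: indicator_def)
    then show ?thesis
      using a by (intro disjI2 exI[of _ "indicator {a}"]) simp
  qed
next
  case (Suc l)
  have mv_Suc: "mv G (Suc l) d i = mv G l d i + G i l * d l" for d i
    by (simp add: mv_def)
  from Suc.IH[of b] consider (sol) d where "d \<in> vecs l" "\<forall>i\<in>U. mv G l d i = b i"
    | (cert) y where "\<forall>j<l. (\<Sum>i\<in>U. G i j * y i) = 0" "(\<Sum>i\<in>U. b i * y i) = 1"
    by blast
  then show ?case
  proof cases
    case sol
    then have "d \<in> vecs (Suc l)" "d l = 0"
      by (auto simp: vecs_def)
    then show ?thesis
      using sol(2) by (intro disjI1 bexI[of _ d]) (auto simp: mv_Suc)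
  next
    case cert
    from Suc.IH[of "\<lambda>i. b i + G i l"]
    consider (sol') d where "d \<in> vecs l" "\<forall>i\<in>U. mv G l d i = b i + G i l"
      | (cert') y' where "\<forall>j<l. (\<Sum>i\<in>U. G i j * y' i) = 0"
          "(\<Sum>i\<in>U. (b i + G i l) * y' i) = 1"
      by blast
    then show ?thesis
    proof cases
      case sol'
      have "mv G l (d(l := 1)) = mv G l d"
        by (auto simp: mv_def)
      moreover have "d(l := 1) \<in> vecs (Suc l)"
        using sol'(1) by (auto simp: vecs_def)
      ultimately show ?thesis
        using sol'(2) by (auto simp: mv_Suc add.assoc intro!: bexI[of _ "d(l := 1)"])
    next
      case cert'
      then show ?thesis
        using dual_certificate_extend[OF cert] by blast
    qed
  qed
qed

lemma dmin0_le_hw: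
  assumes "x \<in> C0perp n l G0" "x \<noteq> (\<lambda>_. 0)"
  shows "dmin0 n l G0 \<le> hw n x"
proof -
  define S where "S = {hw n x | x. x \<in> C0perp n l G0 \<and> x \<noteq> (\<lambda>_. 0)}"
  have mem: "hw n x \<in> S"
    using assms unfolding S_def by blast
  have "finite S"
    by (rule finite_subset[of _ "{..n}"]) (auto simp: S_def hw_le)
  moreover have "dmin0 n l G0 = Min S"
    using mem unfolding dmin0_def S_def[symmetric] Let_def by auto
  ultimately show ?thesis
    using mem by simp
qed

definition dual_word_within :: "nat \<Rightarrow> nat \<Rightarrow> (nat \<Rightarrow> nat \<Rightarrow> bit) \<Rightarrow> nat set \<Rightarrow> bool" where
  "dual_word_within n l G0 U \<longleftrightarrow> (\<exists>x\<in>C0perp n l G0. x \<noteq> (\<lambda>_. 0) \<and> {i. x i \<noteq> 0} \<subseteq> U)"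

lemma dmin0_le_card_if_dual_word_within:
  assumes "finite U" "dual_word_within n l G0 U"
  shows "dmin0 n l G0 \<le> card U"
proof -
  obtain x where x: "x \<in> C0perp n l G0" "x \<noteq> (\<lambda>_. 0)" "{i. x i \<noteq> 0} \<subseteq> U"
    using assms(2) by (auto simp: dual_word_within_def)
  have "dmin0 n l G0 \<le> hw n x"
    using x(1,2) by (rule dmin0_le_hw)
  also have "hw n x \<le> card U"
    unfolding hw_def using x(3) assms(1) by (intro card_mono) auto
  finally show ?thesis .
qed

text \<open>Restricting a GF(2) Fredholm certificate for the rows in U to U and extending by zero gives
  the dual word.\<close>

lemma dual_word_within_if_unsolvable:
  assumes U: "U \<subseteq> {..<n}" and unsolvable: "\<not> (\<exists>d\<in>vecs l. \<forall>i\<in>U. mv G0 l d i = b i)"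
  shows "dual_word_within n l G0 U"
proof -
  have "finite U"
    using U finite_subset by blast
  then obtain y where y: "\<forall>j<l. (\<Sum>i\<in>U. G0 i j * y i) = 0" "(\<Sum>i\<in>U. b i * y i) = 1"
    using gf2_alternative[of U l G0 b] unsolvable by blast
  define x where "x i = (if i \<in> U then y i else 0)" for i
  have "(\<Sum>i<n. G0 i j * x i) = (\<Sum>i\<in>U. G0 i j * y i)" for j
  proof -
    have "(\<Sum>i<n. G0 i j * x i) = (\<Sum>i\<in>{..<n} \<inter> U. G0 i j * y i)"
      by (simp add: x_def sum.inter_restrict if_distrib cong: if_cong)
    also have "{..<n} \<inter> U = U"
      using U by auto
    finally show ?thesis .
  qed
  then have "x \<in> C0perp n l G0"
    using U y(1) by (auto simp: C0perp_def vecs_def x_def)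
  moreover have "x \<noteq> (\<lambda>_. 0)"
  proof
    assume "x = (\<lambda>_. 0)"
    then have "\<forall>i\<in>U. y i = 0"
      unfolding x_def by meson
    then show False
      using y(2) by simp
  qed
  moreover have "{i. x i \<noteq> 0} \<subseteq> U"
    by (auto simp: x_def)
  ultimately show ?thesis
    unfolding dual_word_within_def by blast
qed

subsection \<open>The error event\<close>

lemma hdist_read_vec_le:
  assumes "finite U"
  shows "hdist n (read_vec n c U s z) c \<le> hw n z + card {i\<in>U. s i \<noteq> c i}"
proof -
  have "{i. i < n \<and> read_vec n c U s z i \<noteq> c i} \<subseteq> {i. i < n \<and> z i \<noteq> 0} \<union> {i\<in>U. s i \<noteq> c i}"
    by (auto simp: read_vec_def split: if_splits)
  then have "hdist n (read_vec n c U s z) c \<le> card ({i. i < n \<and> z i \<noteq> 0} \<union> {i\<in>U. s i \<noteq> c i})"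
    unfolding hdist_def by (rule card_mono[rotated]) (use assms in auto)
  also have "\<dots> \<le> hw n z + card {i\<in>U. s i \<noteq> c i}"
    unfolding hw_def by (rule card_Un_le)
  finally show ?thesis .
qed

lemma two_step_defect_mismatches:
  assumes U: "U \<subseteq> {..<n}" and s: "s \<in> stucks n U"
    and enc: "two_step_encoder n k l G1 G0 m enc"
  defines "M \<equiv> {i\<in>U. s i \<noteq> codeword k l G1 G0 m (enc U s) i}"
  shows "M = {} \<or> dual_word_within n l G0 U \<and> card M + dmin0 n l G0 \<le> card U + 1"
proof -
  define b where "b i = mv G1 k m i + s i" for i
  define d where "d = enc U s"
  have finU: "finite U"
    using U finite_subset by blast
  have codeword_eq: "codeword k l G1 G0 m d i = s i" if "mv G0 l d i = b i" for i
    using that by (simp add: codeword_def b_def)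
  have encU: "if \<exists>d'\<in>vecs l. \<forall>i\<in>U. mv G0 l d' i = b i
              then \<forall>i\<in>U. mv G0 l d i = b i
              else \<exists>U'\<subseteq>U. card U' = dmin0 n l G0 - 1 \<and> (\<forall>i\<in>U'. mv G0 l d i = b i)"
    using enc[unfolded two_step_encoder_def Let_def, rule_format, OF U s]
    unfolding b_def d_def by (rule conjunct2)
  show ?thesis
  proof (cases "\<exists>d'\<in>vecs l. \<forall>i\<in>U. mv G0 l d' i = b i")
    case True
    then show ?thesis
      using encU by (auto simp: M_def d_def[symmetric] codeword_eq)
  next
    case False
    then obtain U' where U': "U' \<subseteq> U" "card U' = dmin0 n l G0 - 1" "\<forall>i\<in>U'. mv G0 l d i = b i"
      using encU by (metis (full_types))
    have "M \<subseteq> U - U'"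
      using U'(3) by (auto simp: M_def d_def[symmetric] codeword_eq)
    then have "card M \<le> card (U - U')"
      using finU by (intro card_mono) auto
    also have "\<dots> = card U - card U'"
      using finU U'(1) by (simp add: card_Diff_subset finite_subset)
    finally have "card M \<le> card U - card U'" .
    moreover have "card U' \<le> card U"
      using finU U'(1) by (rule card_mono)
    ultimately have "card M + dmin0 n l G0 \<le> card U + 1"
      using U'(2) by linarith
    then show ?thesis
      using dual_word_within_if_unsolvable[OF U False] by blast
  qed
qed

lemma two_step_error_event:
  assumes U: "U \<subseteq> {..<n}" and s: "s \<in> stucks n U" and z: "z \<in> vecs n"
    and enc: "two_step_encoder n k l G1 G0 m enc"
    and dec: "bd_decoder n k l G1 G0 t1 m dec"
    and err: "dec (read_vec n (codeword k l G1 G0 m (enc U s)) U s z) \<noteq> m"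
  shows "t1 < hw n z \<or> dual_word_within n l G0 U \<and> t1 + dmin0 n l G0 - card U \<le> hw n z"
proof -
  define c where "c = codeword k l G1 G0 m (enc U s)"
  define M where "M = {i\<in>U. s i \<noteq> c i}"
  have "enc U s \<in> vecs l"
    using enc[unfolded two_step_encoder_def Let_def, rule_format, OF U s] by (rule conjunct1)
  moreover have "read_vec n c U s z \<in> vecs n"
    by (simp add: read_vec_def vecs_def)
  ultimately have "t1 < hdist n (read_vec n c U s z) c"
    using dec err unfolding bd_decoder_def c_def by (meson not_le)
  moreover have "hdist n (read_vec n c U s z) c \<le> hw n z + card M"
    unfolding M_def using U finite_subset by (blast intro: hdist_read_vec_le)
  ultimately have noise: "t1 < hw n z + card M"
    by linarith
  have "M = {} \<or> dual_word_within n l G0 U \<and> card M + dmin0 n l G0 \<le> card U + 1"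
    unfolding M_def c_def by (rule two_step_defect_mismatches[OF U s enc])
  then show ?thesis
  proof
    assume "M = {}"
    then show ?thesis
      using noise by simp
  next
    assume "dual_word_within n l G0 U \<and> card M + dmin0 n l G0 \<le> card U + 1"
    then show ?thesis
      using noise by linarith
  qed
qed

definition error_prob_given_defects ::
  "nat \<Rightarrow> nat \<Rightarrow> nat \<Rightarrow> (nat \<Rightarrow> nat \<Rightarrow> bit) \<Rightarrow> (nat \<Rightarrow> nat \<Rightarrow> bit) \<Rightarrow> (nat \<Rightarrow> bit)
     \<Rightarrow> (nat set \<Rightarrow> (nat \<Rightarrow> bit) \<Rightarrow> (nat \<Rightarrow> bit)) \<Rightarrow> ((nat \<Rightarrow> bit) \<Rightarrow> (nat \<Rightarrow> bit))
     \<Rightarrow> real \<Rightarrow> nat set \<Rightarrow> real" where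
  "error_prob_given_defects n k l G1 G0 m enc dec p U =
     (1/2) ^ card U * (\<Sum>s\<in>stucks n U. \<Sum>z\<in>vecs n.
        p ^ hw n z * (1 - p) ^ (n - hw n z)
        * (if dec (read_vec n (codeword k l G1 G0 m (enc U s)) U s z) \<noteq> m then 1 else 0))"

lemma error_prob_eq_sum_defects:
  "error_prob n k l G1 G0 m enc dec \<beta> p
   = (\<Sum>U\<in>Pow {..<n}. \<beta> ^ card U * (1 - \<beta>) ^ (n - card U)
                      * error_prob_given_defects n k l G1 G0 m enc dec p U)"
  unfolding error_prob_def error_prob_given_defects_def
  by (simp add: sum_distrib_left mult_ac)

lemma noise_average_error_le:
  assumes U: "U \<subseteq> {..<n}" and s: "s \<in> stucks n U"
    and enc: "two_step_encoder n k l G1 G0 m enc"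
    and dec: "bd_decoder n k l G1 G0 t1 m dec"
    and "0 \<le> p" "p \<le> 1"
  shows "(\<Sum>z\<in>vecs n. p ^ hw n z * (1 - p) ^ (n - hw n z)
          * (if dec (read_vec n (codeword k l G1 G0 m (enc U s)) U s z) \<noteq> m then 1 else 0))
    \<le> binomial_tail n p (t1 + 1)
      + of_bool (dual_word_within n l G0 U) * binomial_tail n p (t1 + dmin0 n l G0 - card U)"
    (is "(\<Sum>z\<in>vecs n. ?q z * ?err z) \<le> ?T1 + ?D * ?T2")
proof -
  define a where "a = t1 + dmin0 n l G0 - card U"
  have "?err z \<le> of_bool (t1 + 1 \<le> hw n z) + ?D * of_bool (a \<le> hw n z)" if z: "z \<in> vecs n" for z
  proof (cases "dec (read_vec n (codeword k l G1 G0 m (enc U s)) U s z) = m")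
    case False
    then show ?thesis
      using two_step_error_event[OF U s z enc dec False] by (auto simp: a_def)
  qed simp
  then have "(\<Sum>z\<in>vecs n. ?q z * ?err z)
      \<le> (\<Sum>z\<in>vecs n. ?q z * (of_bool (t1 + 1 \<le> hw n z) + ?D * of_bool (a \<le> hw n z)))"
    using assms(5,6) by (intro sum_mono mult_left_mono) simp_all
  also have "\<dots> = (\<Sum>z\<in>vecs n. ?q z * of_bool (t1 + 1 \<le> hw n z))
      + ?D * (\<Sum>z\<in>vecs n. ?q z * of_bool (a \<le> hw n z))"
    by (simp add: distrib_left sum.distrib sum_distrib_left mult.left_commute)
  also have "\<dots> = ?T1 + ?D * ?T2"
    by (simp add: sum_vecs_weight_ge a_def)
  finally show ?thesis .
qed

lemma error_prob_given_defects_le: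
  assumes U: "U \<subseteq> {..<n}"
    and enc: "two_step_encoder n k l G1 G0 m enc"
    and dec: "bd_decoder n k l G1 G0 t1 m dec"
    and "0 \<le> p" "p \<le> 1"
  shows "error_prob_given_defects n k l G1 G0 m enc dec p U
    \<le> binomial_tail n p (t1 + 1)
      + of_bool (dual_word_within n l G0 U) * binomial_tail n p (t1 + dmin0 n l G0 - card U)"
    (is "_ \<le> ?bound")
proof -
  have "error_prob_given_defects n k l G1 G0 m enc dec p U
      \<le> (1/2) ^ card U * (of_nat (card (stucks n U)) * ?bound)"
    unfolding error_prob_given_defects_def
    using noise_average_error_le[OF U _ enc dec assms(4,5)]
    by (intro mult_left_mono sum_bounded_above) simp_all
  also have "\<dots> = ?bound"
    by (simp add: card_stucks[OF U] power_one_over flip: power_mult_distrib)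
  finally show ?thesis .
qed

subsection \<open>Counting defect sets that contain a nonzero dual word\<close>

lemma card_supersets_le:
  assumes "finite A" "S \<subseteq> A"
  shows "card {U. U \<subseteq> A \<and> card U = u \<and> S \<subseteq> U} \<le> (card A - card S) choose (u - card S)"
proof -
  have finS: "finite S"
    using assms finite_subset by blast
  have "{U. U \<subseteq> A \<and> card U = u \<and> S \<subseteq> U}
      \<subseteq> (\<lambda>V. V \<union> S) ` {V. V \<subseteq> A - S \<and> card V = u - card S}"
  proof
    fix U assume U: "U \<in> {U. U \<subseteq> A \<and> card U = u \<and> S \<subseteq> U}"
    then have "U = (U - S) \<union> S" "card (U - S) = u - card S"
      using finS by (auto simp: card_Diff_subset)
    then show "U \<in> (\<lambda>V. V \<union> S) ` {V. V \<subseteq> A - S \<and> card V = u - card S}"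
      using U by blast
  qed
  then have "card {U. U \<subseteq> A \<and> card U = u \<and> S \<subseteq> U}
      \<le> card ((\<lambda>V. V \<union> S) ` {V. V \<subseteq> A - S \<and> card V = u - card S})"
    by (rule card_mono[rotated]) (use assms in simp)
  also have "\<dots> \<le> card {V. V \<subseteq> A - S \<and> card V = u - card S}"
    by (rule card_image_le) (use assms in simp)
  also have "\<dots> = (card A - card S) choose (u - card S)"
    using assms finS by (simp add: n_subsets card_Diff_subset)
  finally show ?thesis .
qed

lemma defect_sets_dual_word_subset_supersets:
  "{U. U \<subseteq> {..<n} \<and> card U = u \<and> dual_word_within n l G0 U}
   \<subseteq> (\<Union>x\<in>{x\<in>C0perp n l G0. x \<noteq> (\<lambda>_. 0) \<and> hw n x \<le> u}.
        {U. U \<subseteq> {..<n} \<and> card U = u \<and> {i. x i \<noteq> 0} \<subseteq> U})"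
proof
  fix U assume U: "U \<in> {U. U \<subseteq> {..<n} \<and> card U = u \<and> dual_word_within n l G0 U}"
  then obtain x where x: "x \<in> C0perp n l G0" "x \<noteq> (\<lambda>_. 0)" "{i. x i \<noteq> 0} \<subseteq> U"
    by (auto simp: dual_word_within_def)
  have "hw n x = card {i. x i \<noteq> 0}"
    using x(1) by (intro hw_eq_card_support) (simp add: C0perp_def)
  also have "\<dots> \<le> card U"
    using U x(3) by (intro card_mono) (auto intro: finite_subset)
  finally have "hw n x \<le> u"
    using U by simp
  then show "U \<in> (\<Union>x\<in>{x\<in>C0perp n l G0. x \<noteq> (\<lambda>_. 0) \<and> hw n x \<le> u}.
        {U. U \<subseteq> {..<n} \<and> card U = u \<and> {i. x i \<noteq> 0} \<subseteq> U})"
    using U x by blast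
qed

lemma sum_dual_words_by_weight_le:
  "(\<Sum>x\<in>{x\<in>C0perp n l G0. x \<noteq> (\<lambda>_. 0) \<and> hw n x \<le> u}. (n - hw n x) choose (u - hw n x))
   \<le> (\<Sum>w = dmin0 n l G0..u. B0 n l G0 w * ((n - w) choose (u - w)))"
proof -
  define X where "X = {x\<in>C0perp n l G0. x \<noteq> (\<lambda>_. 0) \<and> hw n x \<le> u}"
  have finC0perp: "finite (C0perp n l G0)"
    by (rule finite_subset[OF _ finite_vecs[of n]]) (auto simp: C0perp_def)
  have "hw n ` X \<subseteq> {dmin0 n l G0..u}"
    using dmin0_le_hw by (auto simp: X_def)
  then have "(\<Sum>x\<in>X. (n - hw n x) choose (u - hw n x))
      = (\<Sum>w = dmin0 n l G0..u. \<Sum>x\<in>{x\<in>X. hw n x = w}. (n - hw n x) choose (u - hw n x))"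
    using finC0perp by (intro sum.group[symmetric]) (simp_all add: X_def)
  also have "\<dots> \<le> (\<Sum>w = dmin0 n l G0..u. B0 n l G0 w * ((n - w) choose (u - w)))"
  proof (rule sum_mono)
    fix w
    have "card {x\<in>X. hw n x = w} \<le> B0 n l G0 w"
      unfolding B0_def using finC0perp by (intro card_mono) (auto simp: X_def)
    then show "(\<Sum>x\<in>{x\<in>X. hw n x = w}. (n - hw n x) choose (u - hw n x))
        \<le> B0 n l G0 w * ((n - w) choose (u - w))"
      by simp
  qed
  finally show ?thesis
    unfolding X_def .
qed

lemma card_defect_sets_dual_word_le:
  "card {U. U \<subseteq> {..<n} \<and> card U = u \<and> dual_word_within n l G0 U}
     \<le> (\<Sum>w = dmin0 n l G0..u. B0 n l G0 w * ((n - w) choose (u - w)))"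
proof -
  define X where "X = {x\<in>C0perp n l G0. x \<noteq> (\<lambda>_. 0) \<and> hw n x \<le> u}"
  define F where "F x = {U. U \<subseteq> {..<n} \<and> card U = u \<and> {i. x i \<noteq> 0} \<subseteq> U}"
    for x :: "nat \<Rightarrow> bit"
  have X_vecs: "X \<subseteq> vecs n"
    by (auto simp: X_def C0perp_def)
  have "card {U. U \<subseteq> {..<n} \<and> card U = u \<and> dual_word_within n l G0 U} \<le> card (\<Union>x\<in>X. F x)"
    using defect_sets_dual_word_subset_supersets[of n u l G0] X_vecs
    by (intro card_mono) (auto simp: X_def F_def intro: finite_subset[OF _ finite_vecs]
        finite_subset[of _ "Pow {..<n}"])
  also have "\<dots> \<le> (\<Sum>x\<in>X. card (F x))"
    using X_vecs by (intro card_UN_le) (rule finite_subset[OF _ finite_vecs])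
  also have "\<dots> \<le> (\<Sum>x\<in>X. (n - hw n x) choose (u - hw n x))"
  proof (rule sum_mono)
    fix x assume "x \<in> X"
    then have x: "x \<in> vecs n"
      using X_vecs by blast
    then have "{i. x i \<noteq> 0} \<subseteq> {..<n}"
      by (auto simp: vecs_def not_less[symmetric])
    then show "card (F x) \<le> (n - hw n x) choose (u - hw n x)"
      unfolding F_def hw_eq_card_support[OF x] by (rule card_supersets_le[of "{..<n}", simplified])
  qed
  also have "\<dots> \<le> (\<Sum>w = dmin0 n l G0..u. B0 n l G0 w * ((n - w) choose (u - w)))"
    unfolding X_def by (rule sum_dual_words_by_weight_le)
  finally show ?thesis .
qed

lemma card_defect_sets_dual_word_eq_0:
  assumes "u < dmin0 n l G0"
  shows "card {U. U \<subseteq> {..<n} \<and> card U = u \<and> dual_word_within n l G0 U} = 0"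
proof -
  have "\<not> (U \<subseteq> {..<n} \<and> card U = u \<and> dual_word_within n l G0 U)" for U
  proof
    assume U: "U \<subseteq> {..<n} \<and> card U = u \<and> dual_word_within n l G0 U"
    then have "finite U"
      using finite_subset by blast
    then have "dmin0 n l G0 \<le> card U"
      using U by (intro dmin0_le_card_if_dual_word_within) simp_all
    then show False
      using U assms by linarith
  qed
  then show ?thesis
    by simp
qed

lemma card_defect_sets_dual_word_le_min:
  assumes "u \<le> n"
  shows "real (card {U. U \<subseteq> {..<n} \<and> card U = u \<and> dual_word_within n l G0 U})
    \<le> real (n choose u)
      * min ((\<Sum>w = dmin0 n l G0..u. real (B0 n l G0 w) * real ((n - w) choose (u - w)))
             / real (n choose u)) 1"
proof -
  define N where "N = card {U. U \<subseteq> {..<n} \<and> card U = u \<and> dual_word_within n l G0 U}"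
  define S where "S = (\<Sum>w = dmin0 n l G0..u. real (B0 n l G0 w) * real ((n - w) choose (u - w)))"
  have "real N \<le> S"
    using of_nat_mono[OF card_defect_sets_dual_word_le[of n u l G0]] by (simp add: N_def S_def)
  moreover have "N \<le> n choose u"
  proof -
    have "N \<le> card {U. U \<subseteq> {..<n} \<and> card U = u}"
      unfolding N_def by (rule card_mono) (auto intro: finite_subset[of _ "Pow {..<n}"])
    then show ?thesis
      by (simp add: n_subsets)
  qed
  moreover have "0 < real (n choose u)"
    using assms by simp
  ultimately show ?thesis
    unfolding N_def[symmetric] S_def[symmetric]
    by (cases "S / real (n choose u) \<le> 1") (simp_all add: min_def)
qed

lemma sum_defect_sets_dual_word_le:
  fixes \<beta> :: real
  assumes "0 \<le> \<beta>" "\<beta> \<le> 1" "\<And>u. 0 \<le> g u"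
  shows "(\<Sum>u\<le>n. \<beta> ^ u * (1 - \<beta>) ^ (n - u) * g u
            * real (card {U. U \<subseteq> {..<n} \<and> card U = u \<and> dual_word_within n l G0 U}))
    \<le> (\<Sum>u = dmin0 n l G0..n. real (n choose u) * \<beta> ^ u * (1 - \<beta>) ^ (n - u)
          * min ((\<Sum>w = dmin0 n l G0..u. real (B0 n l G0 w) * real ((n - w) choose (u - w)))
                 / real (n choose u)) 1
          * g u)"
proof -
  define N where "N u = card {U. U \<subseteq> {..<n} \<and> card U = u \<and> dual_word_within n l G0 U}" for u
  define M where "M u = min ((\<Sum>w = dmin0 n l G0..u. real (B0 n l G0 w) * real ((n - w) choose (u - w)))
                             / real (n choose u)) 1" for u
  have "(\<Sum>u\<le>n. \<beta> ^ u * (1 - \<beta>) ^ (n - u) * g u * real (N u))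
      = (\<Sum>u = dmin0 n l G0..n. \<beta> ^ u * (1 - \<beta>) ^ (n - u) * g u * real (N u))"
  proof (rule sum.mono_neutral_right)
    show "\<forall>u\<in>{..n} - {dmin0 n l G0..n}. \<beta> ^ u * (1 - \<beta>) ^ (n - u) * g u * real (N u) = 0"
    proof
      fix u assume "u \<in> {..n} - {dmin0 n l G0..n}"
      then have "N u = 0"
        unfolding N_def by (intro card_defect_sets_dual_word_eq_0) auto
      then show "\<beta> ^ u * (1 - \<beta>) ^ (n - u) * g u * real (N u) = 0"
        by simp
    qed
  qed auto
  also have "\<dots> \<le> (\<Sum>u = dmin0 n l G0..n. \<beta> ^ u * (1 - \<beta>) ^ (n - u) * g u
                                           * (real (n choose u) * M u))"
    using assms card_defect_sets_dual_word_le_min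
    by (intro sum_mono mult_left_mono) (simp_all add: N_def M_def)
  finally show ?thesis
    unfolding N_def M_def by (simp add: mult_ac)
qed

theorem theorem5:
  fixes n k l :: nat
    and G1 G0 :: "nat \<Rightarrow> nat \<Rightarrow> bit"
    and m :: "nat \<Rightarrow> bit"
    and enc :: "nat set \<Rightarrow> (nat \<Rightarrow> bit) \<Rightarrow> (nat \<Rightarrow> bit)"
    and dec :: "(nat \<Rightarrow> bit) \<Rightarrow> (nat \<Rightarrow> bit)"
    and \<beta> p :: real
  assumes "full_col_rank n k l G1 G0"
    and "m \<in> vecs k"
    and "0 \<le> \<beta>" "\<beta> \<le> 1" "0 \<le> p" "p \<le> 1"
    and "two_step_encoder n k l G1 G0 m enc"
    and "bd_decoder n k l G1 G0 ((dmin1 n k l G1 G0 - 1) div 2) m dec"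
  shows "error_prob n k l G1 G0 m enc dec \<beta> p \<le>
    (let d0 = dmin0 n l G0; t1 = (dmin1 n k l G1 G0 - 1) div 2 in
      (\<Sum>u = d0..n.
          real (n choose u) * \<beta> ^ u * (1 - \<beta>) ^ (n - u)
        * min ((\<Sum>w = d0..u. real (B0 n l G0 w) * real ((n - w) choose (u - w))) / real (n choose u)) 1
        * (\<Sum>t = t1 + d0 - u..n. real (n choose t) * p ^ t * (1 - p) ^ (n - t)))
      + (\<Sum>t = t1 + 1..n. real (n choose t) * p ^ t * (1 - p) ^ (n - t)))"
proof -
  define d0 where "d0 = dmin0 n l G0"
  define t1 where "t1 = (dmin1 n k l G1 G0 - 1) div 2"
  define T where "T a = binomial_tail n p a" for a
  have "error_prob n k l G1 G0 m enc dec \<beta> p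
      \<le> (\<Sum>U\<in>Pow {..<n}. \<beta> ^ card U * (1 - \<beta>) ^ (n - card U)
           * (T (t1 + 1) + of_bool (dual_word_within n l G0 U) * T (t1 + d0 - card U)))"
    unfolding error_prob_eq_sum_defects T_def d0_def t1_def
    using assms(3,4) error_prob_given_defects_le[OF _ assms(7,8,5,6)]
    by (intro sum_mono mult_left_mono) auto
  also have "\<dots> = T (t1 + 1) + (\<Sum>u\<le>n. \<beta> ^ u * (1 - \<beta>) ^ (n - u) * T (t1 + d0 - u)
        * real (card {U. U \<subseteq> {..<n} \<and> card U = u \<and> dual_word_within n l G0 U}))"
    by (rule sum_Pow_binomial_weights_split)
  also have "\<dots> \<le> T (t1 + 1) + (\<Sum>u = d0..n. real (n choose u) * \<beta> ^ u * (1 - \<beta>) ^ (n - u)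
        * min ((\<Sum>w = d0..u. real (B0 n l G0 w) * real ((n - w) choose (u - w))) / real (n choose u)) 1
        * T (t1 + d0 - u))"
    unfolding d0_def T_def
    by (intro add_left_mono sum_defect_sets_dual_word_le assms(3,4) binomial_tail_nonneg assms(5,6))
  finally show ?thesis
    unfolding Let_def d0_def t1_def T_def binomial_tail_def by (simp add: add.commute)
qed

end
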